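(* Let $A=\sum_{i=1}^m e_ia_i^T$ be a real $m\times n$ matrix with rows $a_1,\dots,a_m\in\mathbb R^n$, and define $A_4=\sum_{i=1}^m a_i^{\otimes4}\in(\mathbb R^n)^{\otimes4}$, $A_3=\sum_{i=1}^m a_i\otimes a_i\otimes e_i\in\mathbb R^n\otimes\mathbb R^n\otimes\mathbb R^m$, and $A_{2,2}=\sum_{i=1}^m a_ia_i^T\otimes a_ia_i^T$, an operator on $(\mathbb R^n)^{\otimes2}$. Then \[\|A\|_{2\to4}^4=\|A_4\|_{\rm inj}=\|A_3\|_{\rm inj}^2=\|A_4\|_{{\rm inj}[\mathbb C]}=\|A_3\|_{{\rm inj}[\mathbb C]}^2=h_{\mathrm{Sep}^2(\mathbb R^n)}(A_{2,2})=h_{\mathrm{Sep}^2(\mathbb C^n)}(A_{2,2}).\]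
   Context: In this statement all norms and inner products are counting (unnormalized) ones: $\|x\|_p=(\sum_i|x_i|^p)^{1/p}$, $\langle x,y\rangle=\sum_i \bar x_iy_i$, $\|A\|_{2\to4}=\max_{x\ne0}\|Ax\|_4/\|x\|_2$ over $x\in\mathbb R^n$, and $e_i$ is the $i$-th standard basis vector. For a tensor $T\in V_1\otimes\cdots\otimes V_r$ of real spaces, $\|T\|_{\rm inj}=\max|\langle T,x_1\otimes\cdots\otimes x_r\rangle|$ over real unit vectors $x_j\in V_j$, and $\|T\|_{{\rm inj}[\mathbb C]}$ is the same maximum over complex unit vectors $x_j$. For $\mathbb F\in\{\mathbb R,\mathbb C\}$, $\mathrm{Sep}^2(\mathbb F^n)=\mathrm{conv}\{v_1v_1^*\otimes v_2v_2^*: v_1,v_2\in\mathbb F^n,\ \|v_1\|_2=\|v_2\|_2=1\}$, and for a bounded convex set $K$ of matrices, $h_K(X)=\max_{Y\in K}|\langle X,Y\rangle|$ with $\langle X,Y\rangle=\mathrm{tr}(X^*Y)$. *)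

theory Defs
  imports "HOL-Analysis.Analysis"
begin

definition l4norm :: "real^'m \<Rightarrow> real" where
  "l4norm v = (\<Sum>i\<in>UNIV. \<bar>v $ i\<bar> ^ 4) powr (1/4)"

definition norm_2to4 :: "real^'n^'m \<Rightarrow> real" where
  "norm_2to4 A = (SUP x\<in>{x::real^'n. x \<noteq> 0}. l4norm (A *v x) / norm x)"

definition inj4 :: "('a::finite \<Rightarrow> 'b::finite \<Rightarrow> 'c::finite \<Rightarrow> 'd::finite \<Rightarrow> real) \<Rightarrow> real" where
  "inj4 T = (SUP (x1,x2,x3,x4)\<in>{(x1::real^'a,x2::real^'b,x3::real^'c,x4::real^'d).
      norm x1 = 1 \<and> norm x2 = 1 \<and> norm x3 = 1 \<and> norm x4 = 1}.
      \<bar>\<Sum>j1\<in>UNIV. \<Sum>j2\<in>UNIV. \<Sum>j3\<in>UNIV. \<Sum>j4\<in>UNIV.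
         T j1 j2 j3 j4 * x1$j1 * x2$j2 * x3$j3 * x4$j4\<bar>)"

definition inj4C :: "('a::finite \<Rightarrow> 'b::finite \<Rightarrow> 'c::finite \<Rightarrow> 'd::finite \<Rightarrow> real) \<Rightarrow> real" where
  "inj4C T = (SUP (x1,x2,x3,x4)\<in>{(x1::complex^'a,x2::complex^'b,x3::complex^'c,x4::complex^'d).
      norm x1 = 1 \<and> norm x2 = 1 \<and> norm x3 = 1 \<and> norm x4 = 1}.
      cmod (\<Sum>j1\<in>UNIV. \<Sum>j2\<in>UNIV. \<Sum>j3\<in>UNIV. \<Sum>j4\<in>UNIV.
         cnj (complex_of_real (T j1 j2 j3 j4)) * x1$j1 * x2$j2 * x3$j3 * x4$j4))"

definition inj3 :: "('a::finite \<Rightarrow> 'b::finite \<Rightarrow> 'c::finite \<Rightarrow> real) \<Rightarrow> real" where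
  "inj3 T = (SUP (x1,x2,x3)\<in>{(x1::real^'a,x2::real^'b,x3::real^'c).
      norm x1 = 1 \<and> norm x2 = 1 \<and> norm x3 = 1}.
      \<bar>\<Sum>j1\<in>UNIV. \<Sum>j2\<in>UNIV. \<Sum>j3\<in>UNIV. T j1 j2 j3 * x1$j1 * x2$j2 * x3$j3\<bar>)"

definition inj3C :: "('a::finite \<Rightarrow> 'b::finite \<Rightarrow> 'c::finite \<Rightarrow> real) \<Rightarrow> real" where
  "inj3C T = (SUP (x1,x2,x3)\<in>{(x1::complex^'a,x2::complex^'b,x3::complex^'c).
      norm x1 = 1 \<and> norm x2 = 1 \<and> norm x3 = 1}.
      cmod (\<Sum>j1\<in>UNIV. \<Sum>j2\<in>UNIV. \<Sum>j3\<in>UNIV.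
         cnj (complex_of_real (T j1 j2 j3)) * x1$j1 * x2$j2 * x3$j3))"

definition tensA4 :: "real^'n::finite^'m::finite \<Rightarrow> 'n \<Rightarrow> 'n \<Rightarrow> 'n \<Rightarrow> 'n \<Rightarrow> real" where
  "tensA4 A j1 j2 j3 j4 = (\<Sum>i\<in>UNIV. A$i$j1 * A$i$j2 * A$i$j3 * A$i$j4)"

definition tensA3 :: "real^'n::finite^'m::finite \<Rightarrow> 'n \<Rightarrow> 'n \<Rightarrow> 'm \<Rightarrow> real" where
  "tensA3 A j1 j2 k = (\<Sum>i\<in>UNIV. A$i$j1 * A$i$j2 * (if k = i then 1 else 0))"

text \<open>Operators on F^n (x) F^n as matrices indexed by pairs; the Kronecker product
  convention (X (x) Y)_{(j1,j2),(k1,k2)} = X_{j1 k1} Y_{j2 k2}.\<close>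
definition opA22 :: "real^'n::finite^'m::finite \<Rightarrow> real^('n\<times>'n)^('n\<times>'n)" where
  "opA22 A = (\<chi> p q. \<Sum>i\<in>UNIV. (A$i$(fst p) * A$i$(fst q)) * (A$i$(snd p) * A$i$(snd q)))"

definition SepR :: "(real^('n::finite\<times>'n)^('n\<times>'n)) set" where
  "SepR = convex hull {(\<chi> p q. (v1$(fst p) * v1$(fst q)) * (v2$(snd p) * v2$(snd q)))
       | v1 v2 :: real^'n. norm v1 = 1 \<and> norm v2 = 1}"

definition SepC :: "(complex^('n::finite\<times>'n)^('n\<times>'n)) set" where
  "SepC = convex hull {(\<chi> p q. (v1$(fst p) * cnj (v1$(fst q))) * (v2$(snd p) * cnj (v2$(snd q))))
       | v1 v2 :: complex^'n. norm v1 = 1 \<and> norm v2 = 1}"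

definition hR :: "(real^'p^'p) set \<Rightarrow> real^'p^'p \<Rightarrow> real" where
  "hR K X = (SUP Y\<in>K. \<bar>\<Sum>p\<in>UNIV. \<Sum>q\<in>UNIV. X$p$q * Y$p$q\<bar>)"

definition hC :: "(complex^'p^'p) set \<Rightarrow> complex^'p^'p \<Rightarrow> real" where
  "hC K X = (SUP Y\<in>K. cmod (\<Sum>p\<in>UNIV. \<Sum>q\<in>UNIV. cnj (X$p$q) * Y$p$q))"

definition cplx_mat :: "real^'p^'q \<Rightarrow> complex^'p^'q" where
  "cplx_mat X = (\<chi> i j. complex_of_real (X$i$j))"

end

theory Submission
  imports Defs
begin

text \<open>
  All seven quantities equal N = max over unit x of sum_i <a_i,x>^4 (here \<open>quartic_max A\<close>,
  with \<open>row_dot A i x\<close> = <a_i,x>); the order-3 norms equal sqrt N. Each is a supremum over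
  unit vectors of a contraction that rewrites as sum_i <a_i,x1><a_i,x2><a_i,x3><a_i,x4>
  (resp. sum_i <a_i,x1><a_i,x2> z_i). Taking every x_k equal to a real maximiser x0, and z
  proportional to (<a_i,x0>^2)_i, attains the value. Conversely AM-GM (resp. Cauchy-Schwarz)
  bounds the contraction by the fourth-power sums sum_i |<a_i,x_k>|^4 <= N. For complex
  x = u + iv this bound follows from the real one, since |<a_i,x>|^4 = p_i^4 + q_i^4 + 2 p_i^2 q_i^2
  and sum_i p_i^2 q_i^2 <= N |u|^2 |v|^2 by Cauchy-Schwarz. The support functions reduce to
  product states because |<A_22, Y>| <= N is a convex condition on Y.
\<close>

lemma SUP_eq_attained:
  assumes "x \<in> S" "f x = c" "\<And>y. y \<in> S \<Longrightarrow> f y \<le> c"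
  shows "(SUP y\<in>S. f y) = (c::real)"
  using assms by (intro cSup_eq_maximum) auto

lemma abs_mult4_le_avg_power4:
  fixes a b c d :: real
  shows "\<bar>a * b * c * d\<bar> \<le> (a ^ 4 + b ^ 4 + c ^ 4 + d ^ 4) / 4"
proof -
  have "2 * \<bar>a * b\<bar> * \<bar>c * d\<bar> \<le> \<bar>a * b\<bar>\<^sup>2 + \<bar>c * d\<bar>\<^sup>2"
    by (rule sum_squares_bound)
  moreover have "2 * a\<^sup>2 * b\<^sup>2 \<le> a ^ 4 + b ^ 4" "2 * c\<^sup>2 * d\<^sup>2 \<le> c ^ 4 + d ^ 4"
    using sum_squares_bound[of "a\<^sup>2" "b\<^sup>2"] sum_squares_bound[of "c\<^sup>2" "d\<^sup>2"]
    by (simp_all flip: power_mult)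
  ultimately show ?thesis
    by (simp add: abs_mult power_mult_distrib)
qed

lemma norm_sum_mult4_le:
  fixes w1 w2 w3 w4 :: "'i \<Rightarrow> 'a::real_normed_div_algebra"
  assumes "(\<Sum>i\<in>I. norm (w1 i) ^ 4) \<le> N" "(\<Sum>i\<in>I. norm (w2 i) ^ 4) \<le> N"
    and "(\<Sum>i\<in>I. norm (w3 i) ^ 4) \<le> N" "(\<Sum>i\<in>I. norm (w4 i) ^ 4) \<le> N"
  shows "norm (\<Sum>i\<in>I. w1 i * w2 i * w3 i * w4 i) \<le> N"
proof -
  have "norm (\<Sum>i\<in>I. w1 i * w2 i * w3 i * w4 i)
      \<le> (\<Sum>i\<in>I. \<bar>norm (w1 i) * norm (w2 i) * norm (w3 i) * norm (w4 i)\<bar>)"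
    by (rule order_trans[OF norm_sum]) (simp add: norm_mult)
  also have "\<dots> \<le> (\<Sum>i\<in>I. (norm (w1 i) ^ 4 + norm (w2 i) ^ 4 + norm (w3 i) ^ 4 + norm (w4 i) ^ 4) / 4)"
    by (intro sum_mono abs_mult4_le_avg_power4)
  also have "\<dots> \<le> N"
    using assms by (simp add: sum.distrib flip: sum_divide_distrib)
  finally show ?thesis .
qed

lemma norm_sum_mult3_le:
  fixes w1 w2 z :: "'i \<Rightarrow> 'a::real_normed_div_algebra"
  assumes "(\<Sum>i\<in>I. norm (w1 i) ^ 4) \<le> N" "(\<Sum>i\<in>I. norm (w2 i) ^ 4) \<le> N"
    and "L2_set (\<lambda>i. norm (z i)) I \<le> 1"
  shows "norm (\<Sum>i\<in>I. w1 i * w2 i * z i) \<le> sqrt N"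
proof -
  let ?n = "\<lambda>i. norm (w1 i) * norm (w2 i)"
  have "(\<Sum>i\<in>I. ?n i ^ 2) = norm (\<Sum>i\<in>I. norm (w1 i) * norm (w2 i) * norm (w1 i) * norm (w2 i))"
    by (simp add: power2_eq_square mult_ac sum_nonneg)
  also have "\<dots> \<le> N"
    using assms(1,2) by (intro norm_sum_mult4_le) simp_all
  finally have n_le: "L2_set ?n I \<le> sqrt N"
    unfolding L2_set_def by (rule real_sqrt_le_mono)
  have "norm (\<Sum>i\<in>I. w1 i * w2 i * z i) \<le> (\<Sum>i\<in>I. \<bar>?n i\<bar> * \<bar>norm (z i)\<bar>)"
    by (rule order_trans[OF norm_sum]) (simp add: norm_mult)
  also have "\<dots> \<le> L2_set ?n I * L2_set (\<lambda>i. norm (z i)) I"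
    by (rule L2_set_mult_ineq)
  also have "\<dots> \<le> sqrt N * 1"
    using n_le order_trans[OF L2_set_nonneg n_le] assms(3) by (intro mult_mono) auto
  finally show ?thesis by simp
qed

lemma exists_unit_vec_inner_eq_norm:
  fixes w :: "real^'m"
  obtains z where "norm z = 1" "(\<Sum>i\<in>UNIV. w$i * z$i) = norm w"
proof (cases "w = 0")
  case True
  obtain z :: "real^'m" where "norm z = 1" using vector_choose_size[of 1] by auto
  with True show ?thesis using that by simp
next
  case False
  have "(\<Sum>i\<in>UNIV. w$i * sgn w$i) = inner w w / norm w"
    by (simp add: sgn_div_norm inner_vec_def divide_inverse mult_ac sum_distrib_left)
  also have "\<dots> = norm w" by (simp add: dot_square_norm power2_eq_square)
  finally show ?thesis using that[of "sgn w"] False by (simp add: norm_sgn)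
qed

lemma sum_rank_one_contract4:
  fixes a :: "'i \<Rightarrow> 'j \<Rightarrow> 'a::comm_semiring_0"
  shows "(\<Sum>j1\<in>J. \<Sum>j2\<in>J. \<Sum>j3\<in>J. \<Sum>j4\<in>J.
           (\<Sum>i\<in>I. a i j1 * a i j2 * a i j3 * a i j4) * x1 j1 * x2 j2 * x3 j3 * x4 j4)
       = (\<Sum>i\<in>I. (\<Sum>j\<in>J. a i j * x1 j) * (\<Sum>j\<in>J. a i j * x2 j)
                    * (\<Sum>j\<in>J. a i j * x3 j) * (\<Sum>j\<in>J. a i j * x4 j))"
    (is "_ = ?rhs")
proof -
  have "(\<Sum>j1\<in>J. \<Sum>j2\<in>J. \<Sum>j3\<in>J. \<Sum>j4\<in>J.
           (\<Sum>i\<in>I. a i j1 * a i j2 * a i j3 * a i j4) * x1 j1 * x2 j2 * x3 j3 * x4 j4)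
      = (\<Sum>j1\<in>J. \<Sum>j2\<in>J. \<Sum>j3\<in>J. \<Sum>j4\<in>J. \<Sum>i\<in>I.
           a i j4 * x4 j4 * (a i j3 * x3 j3) * (a i j2 * x2 j2) * (a i j1 * x1 j1))"
    \<comment> \<open>reversed factor order: distributing a product of sums nests the last factor's index outermost\<close>
    by (simp add: sum_distrib_left sum_distrib_right mult_ac)
  also have "\<dots> = (\<Sum>i\<in>I. \<Sum>j1\<in>J. \<Sum>j2\<in>J. \<Sum>j3\<in>J. \<Sum>j4\<in>J.
           a i j4 * x4 j4 * (a i j3 * x3 j3) * (a i j2 * x2 j2) * (a i j1 * x1 j1))"
    by (simp only: sum.swap[of _ J I])
  also have "\<dots> = (\<Sum>i\<in>I. (\<Sum>j\<in>J. a i j * x4 j) * (\<Sum>j\<in>J. a i j * x3 j)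
                    * (\<Sum>j\<in>J. a i j * x2 j) * (\<Sum>j\<in>J. a i j * x1 j))"
    by (simp only: sum_distrib_left sum_distrib_right)
  also have "\<dots> = ?rhs"
    by (simp only: ac_simps)
  finally show ?thesis .
qed

lemma sum_rank_one_contract3:
  fixes a :: "'i \<Rightarrow> 'j \<Rightarrow> 'a::comm_semiring_1"
  assumes "finite I"
  shows "(\<Sum>j1\<in>J. \<Sum>j2\<in>J. \<Sum>k\<in>I.
           (\<Sum>i\<in>I. a i j1 * a i j2 * (if k = i then 1 else 0)) * x1 j1 * x2 j2 * z k)
       = (\<Sum>i\<in>I. (\<Sum>j\<in>J. a i j * x1 j) * (\<Sum>j\<in>J. a i j * x2 j) * z i)"
    (is "_ = ?rhs")
proof -
  have "(\<Sum>j1\<in>J. \<Sum>j2\<in>J. \<Sum>k\<in>I.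
           (\<Sum>i\<in>I. a i j1 * a i j2 * (if k = i then 1 else 0)) * x1 j1 * x2 j2 * z k)
      = (\<Sum>j1\<in>J. \<Sum>j2\<in>J. \<Sum>i\<in>I. a i j2 * x2 j2 * (a i j1 * x1 j1) * z i)"
    using assms by (simp add: if_distrib mult_ac cong: if_cong)
  also have "\<dots> = (\<Sum>i\<in>I. \<Sum>j1\<in>J. \<Sum>j2\<in>J. a i j2 * x2 j2 * (a i j1 * x1 j1) * z i)"
    by (simp only: sum.swap[of _ J I])
  also have "\<dots> = (\<Sum>i\<in>I. (\<Sum>j\<in>J. a i j * x2 j) * (\<Sum>j\<in>J. a i j * x1 j) * z i)"
    by (simp only: sum_distrib_left sum_distrib_right)
  also have "\<dots> = ?rhs"
    by (simp only: ac_simps)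
  finally show ?thesis .
qed

definition row_dot :: "real^'n::finite^'m \<Rightarrow> 'm \<Rightarrow> 'a^'n \<Rightarrow> 'a::real_algebra_1" where
  "row_dot A i x = (\<Sum>j\<in>UNIV. of_real (A$i$j) * x$j)"

definition quartic_form :: "real^'n::finite^'m::finite \<Rightarrow> 'a::real_normed_algebra_1^'n \<Rightarrow> real" where
  "quartic_form A x = (\<Sum>i\<in>UNIV. norm (row_dot A i x) ^ 4)"

definition quartic_max :: "real^'n::finite^'m::finite \<Rightarrow> real" where
  "quartic_max A = Sup (quartic_form A ` sphere (0::real^'n) 1)"

lemma quartic_form_nonneg: "0 \<le> quartic_form A x"
  unfolding quartic_form_def by (simp add: sum_nonneg)

lemma quartic_form_scaleR: "quartic_form A (c *\<^sub>R x) = \<bar>c\<bar> ^ 4 * quartic_form A x"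
proof -
  have "row_dot A i (c *\<^sub>R x) = c *\<^sub>R row_dot A i x" for i
    by (simp add: row_dot_def scaleR_sum_right)
  then show ?thesis
    by (simp add: quartic_form_def power_mult_distrib sum_distrib_left)
qed

lemma quartic_max_attained:
  fixes A :: "real^'n::finite^'m::finite"
  obtains x0 :: "real^'n" where "norm x0 = 1" "quartic_form A x0 = quartic_max A"
    "\<And>y :: real^'n. norm y = 1 \<Longrightarrow> quartic_form A y \<le> quartic_max A"
proof -
  obtain e :: "real^'n" where "norm e = 1"
    using vector_choose_size[of 1] by auto
  then have "sphere (0::real^'n) 1 \<noteq> {}"
    by auto
  moreover have "continuous_on (sphere 0 1) (quartic_form A :: real^'n \<Rightarrow> real)"
    unfolding quartic_form_def row_dot_def by (intro continuous_intros)
  ultimately have "\<exists>x\<in>sphere (0::real^'n) 1. \<forall>y\<in>sphere 0 1. quartic_form A (y::real^'n) \<le> quartic_form A x"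
    by (rule continuous_attains_sup[OF compact_sphere])
  then obtain x0 :: "real^'n" where x0: "x0 \<in> sphere 0 1"
    and max: "\<And>y::real^'n. y \<in> sphere 0 1 \<Longrightarrow> quartic_form A y \<le> quartic_form A x0"
    by blast
  have "quartic_max A = quartic_form A x0"
    unfolding quartic_max_def using x0 max by (intro cSup_eq_maximum) auto
  with x0 max show ?thesis
    using that by simp
qed

lemma quartic_form_le:
  fixes A :: "real^'n::finite^'m::finite" and x :: "real^'n"
  shows "quartic_form A x \<le> quartic_max A * norm x ^ 4"
proof (cases "x = 0")
  case True
  then show ?thesis by (simp add: quartic_form_def row_dot_def)
next
  case False
  obtain x0 :: "real^'n" where "\<And>y :: real^'n. norm y = 1 \<Longrightarrow> quartic_form A y \<le> quartic_max A"
    using quartic_max_attained by blast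
  moreover have "norm ((1 / norm x) *\<^sub>R x) = 1"
    using False by simp
  ultimately have "quartic_form A ((1 / norm x) *\<^sub>R x) \<le> quartic_max A"
    by blast
  then have "quartic_form A x / norm x ^ 4 \<le> quartic_max A"
    by (simp add: quartic_form_scaleR power_one_over)
  with False show ?thesis
    by (simp add: divide_le_eq)
qed

lemma quartic_max_nonneg: "0 \<le> quartic_max (A :: real^'n::finite^'m::finite)"
proof -
  obtain x0 :: "real^'n" where "quartic_form A x0 = quartic_max A"
    using quartic_max_attained by blast
  then show ?thesis
    using quartic_form_nonneg by metis
qed

lemma quartic_form_complex_le:
  fixes A :: "real^'n::finite^'m::finite" and z :: "complex^'n"
  shows "quartic_form A z \<le> quartic_max A * norm z ^ 4"
proof -
  define u :: "real^'n" where "u = (\<chi> j. Re (z$j))"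
  define v :: "real^'n" where "v = (\<chi> j. Im (z$j))"
  define N where "N = quartic_max A"
  let ?p = "\<lambda>i. row_dot A i u" and ?q = "\<lambda>i. row_dot A i v"
  have "cmod (row_dot A i z) ^ 4 = ?p i ^ 4 + ?q i ^ 4 + 2 * (?p i ^ 2 * ?q i ^ 2)" for i
  proof -
    have "cmod (row_dot A i z) ^ 2 = ?p i ^ 2 + ?q i ^ 2"
      by (simp add: cmod_power2 row_dot_def u_def v_def Re_sum Im_sum)
    then have "cmod (row_dot A i z) ^ 4 = (?p i ^ 2 + ?q i ^ 2) ^ 2"
      by (metis numeral_Bit0 power_add power2_eq_square)
    then show ?thesis
      by (simp add: power2_eq_square power4_eq_xxxx algebra_simps)
  qed
  then have quartic_split:
    "quartic_form A z = quartic_form A u + quartic_form A v + 2 * (\<Sum>i\<in>UNIV. ?p i ^ 2 * ?q i ^ 2)"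
    by (simp add: quartic_form_def sum.distrib sum_distrib_left)
  have "(\<Sum>i\<in>UNIV. ?p i ^ 2 * ?q i ^ 2)
      \<le> L2_set (\<lambda>i. ?p i ^ 2) UNIV * L2_set (\<lambda>i. ?q i ^ 2) UNIV"
    using L2_set_mult_ineq[of "\<lambda>i. ?p i ^ 2" "\<lambda>i. ?q i ^ 2" UNIV] by simp
  also have "\<dots> = sqrt (quartic_form A u) * sqrt (quartic_form A v)"
    by (simp add: L2_set_def quartic_form_def flip: power_mult)
  also have "\<dots> \<le> sqrt (N * norm u ^ 4) * sqrt (N * norm v ^ 4)"
    unfolding N_def
    by (intro mult_mono real_sqrt_le_mono quartic_form_le)
      (auto simp: quartic_form_nonneg quartic_max_nonneg)
  also have "\<dots> = N * (norm u ^ 2 * norm v ^ 2)"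
  proof -
    have "sqrt (norm w ^ 4) = norm w ^ 2" for w :: "real^'n"
      using real_sqrt_abs[of "norm w ^ 2"] by (simp flip: power_mult)
    then show ?thesis
      using quartic_max_nonneg[of A] by (simp add: N_def real_sqrt_mult mult_ac)
  qed
  finally have cross: "(\<Sum>i\<in>UNIV. ?p i ^ 2 * ?q i ^ 2) \<le> N * (norm u ^ 2 * norm v ^ 2)" .
  have "norm z ^ 2 = norm u ^ 2 + norm v ^ 2"
    by (simp add: norm_vec_def L2_set_def sum_nonneg cmod_power2 sum.distrib u_def v_def)
  then have "norm z ^ 4 = (norm u ^ 2 + norm v ^ 2) ^ 2"
    by (metis numeral_Bit0 power_add power2_eq_square)
  then have "N * norm z ^ 4 = N * norm u ^ 4 + N * norm v ^ 4 + 2 * (N * (norm u ^ 2 * norm v ^ 2))"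
    by (simp add: power2_eq_square power4_eq_xxxx algebra_simps)
  with quartic_split cross quartic_form_le[of A u] quartic_form_le[of A v] show ?thesis
    unfolding N_def by linarith
qed

lemma tensA4_contract:
  fixes A :: "real^'n::finite^'m::finite" and x1 x2 x3 x4 :: "'a::{real_algebra_1,comm_ring_1}^'n"
  shows "(\<Sum>j1\<in>UNIV. \<Sum>j2\<in>UNIV. \<Sum>j3\<in>UNIV. \<Sum>j4\<in>UNIV.
           of_real (tensA4 A j1 j2 j3 j4) * x1$j1 * x2$j2 * x3$j3 * x4$j4)
       = (\<Sum>i\<in>UNIV. row_dot A i x1 * row_dot A i x2 * row_dot A i x3 * row_dot A i x4)"
  unfolding tensA4_def row_dot_def of_real_sum of_real_mult by (rule sum_rank_one_contract4)

lemma tensA3_contract: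
  fixes A :: "real^'n::finite^'m::finite" and x1 x2 :: "'a::{real_algebra_1,comm_ring_1}^'n"
    and z :: "'a^'m"
  shows "(\<Sum>j1\<in>UNIV. \<Sum>j2\<in>UNIV. \<Sum>k\<in>UNIV. of_real (tensA3 A j1 j2 k) * x1$j1 * x2$j2 * z$k)
       = (\<Sum>i\<in>UNIV. row_dot A i x1 * row_dot A i x2 * z$i)"
proof -
  have "of_real (tensA3 A j1 j2 k)
      = (\<Sum>i\<in>UNIV. of_real (A$i$j1) * of_real (A$i$j2) * (if k = i then 1 else (0::'a)))"
    for j1 j2 k
    by (simp add: tensA3_def of_real_sum if_distrib cong: if_cong)
  then show ?thesis
    unfolding row_dot_def by (simp add: sum_rank_one_contract3)
qed

lemma sum_UNIV_pair: "(\<Sum>p\<in>UNIV. f p) = (\<Sum>a\<in>UNIV. \<Sum>b\<in>UNIV. f (a, b))"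
  by (simp flip: UNIV_Times_UNIV add: sum.cartesian_product')

definition product_stateR :: "real^'n \<Rightarrow> real^'n \<Rightarrow> real^('n::finite \<times> 'n)^('n \<times> 'n)" where
  "product_stateR v1 v2 = (\<chi> p q. (v1$(fst p) * v1$(fst q)) * (v2$(snd p) * v2$(snd q)))"

definition product_stateC :: "complex^'n \<Rightarrow> complex^'n \<Rightarrow> complex^('n::finite \<times> 'n)^('n \<times> 'n)" where
  "product_stateC v1 v2 = (\<chi> p q. (v1$(fst p) * cnj (v1$(fst q))) * (v2$(snd p) * cnj (v2$(snd q))))"

lemma SepR_eq_hull_product_stateR:
  "SepR = convex hull {product_stateR v1 v2 | v1 v2. norm v1 = 1 \<and> norm v2 = 1}"
  unfolding SepR_def product_stateR_def ..

lemma SepC_eq_hull_product_stateC: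
  "SepC = convex hull {product_stateC v1 v2 | v1 v2. norm v1 = 1 \<and> norm v2 = 1}"
  unfolding SepC_def product_stateC_def ..

lemma opA22_contract_product_stateR:
  fixes A :: "real^'n::finite^'m::finite"
  shows "(\<Sum>p\<in>UNIV. \<Sum>q\<in>UNIV. opA22 A $ p $ q * product_stateR v1 v2 $ p $ q)
       = (\<Sum>i\<in>UNIV. row_dot A i v1 * row_dot A i v2 * row_dot A i v1 * row_dot A i v2)"
proof -
  have "(\<Sum>p\<in>UNIV. \<Sum>q\<in>UNIV. opA22 A $ p $ q * product_stateR v1 v2 $ p $ q)
      = (\<Sum>j1\<in>UNIV. \<Sum>j2\<in>UNIV. \<Sum>j3\<in>UNIV. \<Sum>j4\<in>UNIV.
           of_real (tensA4 A j1 j2 j3 j4) * v1$j1 * v2$j2 * v1$j3 * v2$j4)"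
    unfolding opA22_def product_stateR_def tensA4_def
    by (simp add: sum_UNIV_pair sum_distrib_right mult_ac)
  then show ?thesis
    by (simp only: tensA4_contract)
qed

lemma opA22_contract_product_stateC:
  fixes A :: "real^'n::finite^'m::finite"
  shows "(\<Sum>p\<in>UNIV. \<Sum>q\<in>UNIV. cnj (cplx_mat (opA22 A) $ p $ q) * product_stateC v1 v2 $ p $ q)
       = (\<Sum>i\<in>UNIV. row_dot A i v1 * row_dot A i v2 * cnj (row_dot A i v1) * cnj (row_dot A i v2))"
proof -
  let ?c = "\<lambda>v::complex^'n. \<chi> j. cnj (v$j)"
  have row_dot_cnj: "row_dot A i (?c v) = cnj (row_dot A i v)" for i v
    by (simp add: row_dot_def)
  have "(\<Sum>p\<in>UNIV. \<Sum>q\<in>UNIV. cnj (cplx_mat (opA22 A) $ p $ q) * product_stateC v1 v2 $ p $ q)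
      = (\<Sum>j1\<in>UNIV. \<Sum>j2\<in>UNIV. \<Sum>j3\<in>UNIV. \<Sum>j4\<in>UNIV.
           of_real (tensA4 A j1 j2 j3 j4) * v1$j1 * v2$j2 * ?c v1$j3 * ?c v2$j4)"
    unfolding opA22_def product_stateC_def tensA4_def cplx_mat_def
    by (simp add: sum_UNIV_pair sum_distrib_right mult_ac)
  also have "\<dots> = (\<Sum>i\<in>UNIV. row_dot A i v1 * row_dot A i v2 * row_dot A i (?c v1) * row_dot A i (?c v2))"
    by (rule tensA4_contract)
  finally show ?thesis
    by (simp only: row_dot_cnj)
qed

lemma norm_contract4_le:
  fixes A :: "real^'n::finite^'m::finite" and x1 x2 x3 x4 :: "'a::real_normed_field^'n"
  assumes bound: "\<And>x :: 'a^'n. quartic_form A x \<le> N * norm x ^ 4"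
    and "norm x1 = 1" "norm x2 = 1" "norm x3 = 1" "norm x4 = 1"
  shows "norm (\<Sum>i\<in>UNIV. row_dot A i x1 * row_dot A i x2 * row_dot A i x3 * row_dot A i x4) \<le> N"
  using bound[of x1] bound[of x2] bound[of x3] bound[of x4] assms(2-5)
  by (intro norm_sum_mult4_le) (simp_all add: quartic_form_def)

lemma norm_contract3_le:
  fixes A :: "real^'n::finite^'m::finite" and x1 x2 :: "'a::real_normed_field^'n" and z :: "'a^'m"
  assumes bound: "\<And>x :: 'a^'n. quartic_form A x \<le> N * norm x ^ 4"
    and "norm x1 = 1" "norm x2 = 1" "norm z = 1"
  shows "norm (\<Sum>i\<in>UNIV. row_dot A i x1 * row_dot A i x2 * z$i) \<le> sqrt N"
  using bound[of x1] bound[of x2] assms(2-4)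
  by (intro norm_sum_mult3_le) (simp_all add: quartic_form_def norm_vec_def)

lemma norm_2to4_pow4:
  fixes A :: "real^'n::finite^'m::finite"
  shows "norm_2to4 A ^ 4 = quartic_max A"
proof -
  let ?N = "quartic_max A"
  have l4: "l4norm (A *v x) = quartic_form A x powr (1/4)" for x
    by (simp add: l4norm_def quartic_form_def row_dot_def matrix_vector_mult_def)
  have root4: "t powr (1/4) = root 4 t" if "t \<ge> 0" for t :: real
    using that by (simp add: root_powr_inverse)
  obtain x0 :: "real^'n" where "norm x0 = 1" "quartic_form A x0 = ?N"
    using quartic_max_attained by blast
  have "norm_2to4 A = ?N powr (1/4)"
    unfolding norm_2to4_def
  proof (rule SUP_eq_attained[of x0])
    show "x0 \<in> {x. x \<noteq> 0}" "l4norm (A *v x0) / norm x0 = ?N powr (1/4)"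
      using \<open>norm x0 = 1\<close> \<open>quartic_form A x0 = ?N\<close> by (auto simp: l4)
  next
    fix x :: "real^'n"
    assume "x \<in> {x. x \<noteq> 0}"
    have "quartic_form A x powr (1/4) \<le> (?N * norm x ^ 4) powr (1/4)"
      by (intro powr_mono2 quartic_form_le quartic_form_nonneg) simp
    also have "\<dots> = ?N powr (1/4) * norm x"
      by (simp add: powr_mult quartic_max_nonneg root4 real_root_power_cancel)
    finally show "l4norm (A *v x) / norm x \<le> ?N powr (1/4)"
      using \<open>x \<in> {x. x \<noteq> 0}\<close> by (simp add: l4 divide_le_eq)
  qed
  then show ?thesis
    by (simp add: root4 quartic_max_nonneg)
qed

definition cplx_vec :: "real^'n::finite \<Rightarrow> complex^'n" where
  "cplx_vec x = (\<chi> j. complex_of_real (x$j))"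

lemma cplx_vec_component [simp]: "cplx_vec x $ j = complex_of_real (x$j)"
  by (simp add: cplx_vec_def)

lemma norm_cplx_vec [simp]: "norm (cplx_vec x) = norm x"
  by (simp add: norm_vec_def)

lemma row_dot_cplx_vec: "row_dot A i (cplx_vec x) = complex_of_real (row_dot A i x)"
  by (simp add: row_dot_def)

lemma sum_row_dot_pow4:
  fixes A :: "real^'n::finite^'m::finite"
  shows "(\<Sum>i\<in>UNIV. row_dot A i x * row_dot A i x * row_dot A i x * row_dot A i x) = quartic_form A x"
  by (simp add: quartic_form_def flip: power4_eq_xxxx)

lemma inj4_tensA4:
  fixes A :: "real^'n::finite^'m::finite"
  shows "inj4 (tensA4 A) = quartic_max A"
proof -
  obtain x0 :: "real^'n" where x0: "norm x0 = 1" "quartic_form A x0 = quartic_max A"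
    using quartic_max_attained by blast
  show ?thesis
    unfolding inj4_def
  proof (rule SUP_eq_attained[where x="(x0, x0, x0, x0)"], goal_cases)
    case 1
    then show ?case using x0 by simp
  next
    case 2
    then show ?case
      using tensA4_contract[of A x0 x0 x0 x0] x0 quartic_max_nonneg[of A]
      by (simp add: sum_row_dot_pow4)
  next
    case (3 y)
    then obtain x1 x2 x3 x4 :: "real^'n" where "y = (x1, x2, x3, x4)"
      and "norm x1 = 1" "norm x2 = 1" "norm x3 = 1" "norm x4 = 1"
      by auto
    then show ?case
      using tensA4_contract[of A x1 x2 x3 x4] norm_contract4_le[OF quartic_form_le, of x1 x2 x3 x4 A]
      by simp
  qed
qed

lemma inj4C_tensA4:
  fixes A :: "real^'n::finite^'m::finite"
  shows "inj4C (tensA4 A) = quartic_max A"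
proof -
  obtain x0 :: "real^'n" where x0: "norm x0 = 1" "quartic_form A x0 = quartic_max A"
    using quartic_max_attained by blast
  let ?z0 = "cplx_vec x0"
  show ?thesis
    unfolding inj4C_def
  proof (rule SUP_eq_attained[where x="(?z0, ?z0, ?z0, ?z0)"], goal_cases)
    case 1
    then show ?case using x0 by simp
  next
    case 2
    then show ?case
      using tensA4_contract[of A ?z0 ?z0 ?z0 ?z0] x0 quartic_max_nonneg[of A]
      by (simp add: row_dot_cplx_vec flip: of_real_mult of_real_sum sum_row_dot_pow4)
  next
    case (3 y)
    then obtain x1 x2 x3 x4 :: "complex^'n" where "y = (x1, x2, x3, x4)"
      and "norm x1 = 1" "norm x2 = 1" "norm x3 = 1" "norm x4 = 1"
      by auto
    then show ?case
      using tensA4_contract[of A x1 x2 x3 x4]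
        norm_contract4_le[OF quartic_form_complex_le, of x1 x2 x3 x4 A]
      by simp
  qed
qed

lemma quartic_max_attained_contract3:
  fixes A :: "real^'n::finite^'m::finite"
  obtains x0 :: "real^'n" and z0 :: "real^'m" where "norm x0 = 1" "norm z0 = 1"
    "(\<Sum>i\<in>UNIV. row_dot A i x0 * row_dot A i x0 * z0$i) = sqrt (quartic_max A)"
proof -
  obtain x0 :: "real^'n" where x0: "norm x0 = 1" "quartic_form A x0 = quartic_max A"
    using quartic_max_attained by blast
  define w :: "real^'m" where "w = (\<chi> i. row_dot A i x0 * row_dot A i x0)"
  have "norm w = sqrt (quartic_max A)"
    by (simp add: w_def norm_vec_def L2_set_def x0(2)[symmetric] sum_row_dot_pow4[symmetric]
        power2_eq_square mult_ac)
  moreover obtain z0 where "norm z0 = 1" "(\<Sum>i\<in>UNIV. w$i * z0$i) = norm w"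
    using exists_unit_vec_inner_eq_norm by blast
  ultimately show ?thesis
    using that[OF x0(1)] by (simp add: w_def)
qed

lemma inj3_tensA3:
  fixes A :: "real^'n::finite^'m::finite"
  shows "inj3 (tensA3 A) = sqrt (quartic_max A)"
proof -
  obtain x0 :: "real^'n" and z0 :: "real^'m" where x0z0: "norm x0 = 1" "norm z0 = 1"
    "(\<Sum>i\<in>UNIV. row_dot A i x0 * row_dot A i x0 * z0$i) = sqrt (quartic_max A)"
    using quartic_max_attained_contract3 by blast
  show ?thesis
    unfolding inj3_def
  proof (rule SUP_eq_attained[where x="(x0, x0, z0)"], goal_cases)
    case 1
    then show ?case using x0z0 by simp
  next
    case 2
    then show ?case
      using tensA3_contract[of A x0 x0 z0] x0z0 quartic_max_nonneg[of A] by simp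
  next
    case (3 y)
    then obtain x1 x2 :: "real^'n" and z :: "real^'m" where "y = (x1, x2, z)"
      and "norm x1 = 1" "norm x2 = 1" "norm z = 1"
      by auto
    then show ?case
      using tensA3_contract[of A x1 x2 z] norm_contract3_le[OF quartic_form_le, of x1 x2 z A]
      by simp
  qed
qed

lemma inj3C_tensA3:
  fixes A :: "real^'n::finite^'m::finite"
  shows "inj3C (tensA3 A) = sqrt (quartic_max A)"
proof -
  obtain x0 :: "real^'n" and z0 :: "real^'m" where x0z0: "norm x0 = 1" "norm z0 = 1"
    "(\<Sum>i\<in>UNIV. row_dot A i x0 * row_dot A i x0 * z0$i) = sqrt (quartic_max A)"
    using quartic_max_attained_contract3 by blast
  show ?thesis
    unfolding inj3C_def
  proof (rule SUP_eq_attained[where x="(cplx_vec x0, cplx_vec x0, cplx_vec z0)"], goal_cases)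
    case 1
    then show ?case using x0z0 by simp
  next
    case 2
    have "(\<Sum>i\<in>UNIV. row_dot A i (cplx_vec x0) * row_dot A i (cplx_vec x0) * cplx_vec z0 $ i)
        = complex_of_real (sqrt (quartic_max A))"
      unfolding x0z0(3)[symmetric] by (simp add: row_dot_cplx_vec)
    then show ?case
      using tensA3_contract[of A "cplx_vec x0" "cplx_vec x0" "cplx_vec z0"] quartic_max_nonneg[of A]
      by simp
  next
    case (3 y)
    then obtain x1 x2 :: "complex^'n" and z :: "complex^'m" where "y = (x1, x2, z)"
      and "norm x1 = 1" "norm x2 = 1" "norm z = 1"
      by auto
    then show ?case
      using tensA3_contract[of A x1 x2 z] norm_contract3_le[OF quartic_form_complex_le, of x1 x2 z A]
      by simp
  qed
qed

lemma norm_le_on_convex_hull: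
  assumes "linear L" "\<And>Y. Y \<in> S \<Longrightarrow> norm (L Y) \<le> c" "Y \<in> convex hull S"
  shows "norm (L Y) \<le> c"
proof -
  have "convex hull S \<subseteq> L -` cball 0 c"
    using assms(2) by (intro hull_minimal convex_linear_vimage assms(1) convex_cball) auto
  then show ?thesis
    using assms(3) by auto
qed

lemma hR_SepR_opA22:
  fixes A :: "real^'n::finite^'m::finite"
  shows "hR (SepR :: (real^('n \<times> 'n)^('n \<times> 'n)) set) (opA22 A) = quartic_max A"
proof -
  obtain x0 :: "real^'n" where x0: "norm x0 = 1" "quartic_form A x0 = quartic_max A"
    using quartic_max_attained by blast
  let ?L = "\<lambda>Y::real^('n \<times> 'n)^('n \<times> 'n). \<Sum>p\<in>UNIV. \<Sum>q\<in>UNIV. opA22 A $ p $ q * Y $ p $ q"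
  have "linear ?L"
    by (intro linearI) (simp_all add: sum.distrib sum_distrib_left algebra_simps)
  show ?thesis
    unfolding hR_def
  proof (rule SUP_eq_attained[of "product_stateR x0 x0"])
    show "product_stateR x0 x0 \<in> SepR"
      unfolding SepR_eq_hull_product_stateR using x0 by (intro hull_inc) blast
    show "\<bar>?L (product_stateR x0 x0)\<bar> = quartic_max A"
      using x0 quartic_max_nonneg[of A] by (simp add: opA22_contract_product_stateR sum_row_dot_pow4)
  next
    fix Y :: "real^('n \<times> 'n)^('n \<times> 'n)"
    assume "Y \<in> SepR"
    show "\<bar>?L Y\<bar> \<le> quartic_max A"
      using norm_le_on_convex_hull[OF \<open>linear ?L\<close> _
          \<open>Y \<in> SepR\<close>[unfolded SepR_eq_hull_product_stateR]]
        norm_contract4_le[OF quartic_form_le]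
      by (force simp: opA22_contract_product_stateR)
  qed
qed

lemma hC_SepC_opA22:
  fixes A :: "real^'n::finite^'m::finite"
  shows "hC (SepC :: (complex^('n \<times> 'n)^('n \<times> 'n)) set) (cplx_mat (opA22 A)) = quartic_max A"
proof -
  obtain x0 :: "real^'n" where x0: "norm x0 = 1" "quartic_form A x0 = quartic_max A"
    using quartic_max_attained by blast
  let ?z0 = "cplx_vec x0"
  let ?L = "\<lambda>Y::complex^('n \<times> 'n)^('n \<times> 'n).
    \<Sum>p\<in>UNIV. \<Sum>q\<in>UNIV. cnj (cplx_mat (opA22 A) $ p $ q) * Y $ p $ q"
  have "linear ?L"
    by (intro linearI) (simp_all add: sum.distrib distrib_left scaleR_sum_right)
  show ?thesis
    unfolding hC_def
  proof (rule SUP_eq_attained[of "product_stateC ?z0 ?z0"])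
    show "product_stateC ?z0 ?z0 \<in> SepC"
    proof -
      have "norm ?z0 = 1"
        using x0 by simp
      then show ?thesis
        unfolding SepC_eq_hull_product_stateC by (intro hull_inc) blast
    qed
    have "?L (product_stateC ?z0 ?z0) = complex_of_real (quartic_max A)"
      by (simp add: opA22_contract_product_stateC row_dot_cplx_vec x0(2)[symmetric]
          flip: sum_row_dot_pow4)
    then show "cmod (?L (product_stateC ?z0 ?z0)) = quartic_max A"
      using quartic_max_nonneg[of A] by simp
  next
    fix Y :: "complex^('n \<times> 'n)^('n \<times> 'n)"
    assume "Y \<in> SepC"
    have "cmod (?L (product_stateC v1 v2)) \<le> quartic_max A" if "norm v1 = 1" "norm v2 = 1" for v1 v2
      using quartic_form_complex_le[of A v1] quartic_form_complex_le[of A v2] that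
      unfolding opA22_contract_product_stateC
      by (intro norm_sum_mult4_le) (simp_all add: quartic_form_def)
    then show "cmod (?L Y) \<le> quartic_max A"
      using norm_le_on_convex_hull[OF \<open>linear ?L\<close> _
          \<open>Y \<in> SepC\<close>[unfolded SepC_eq_hull_product_stateC]]
      by force
  qed
qed

theorem lemma9p3:
  fixes A :: "real^'n^'m"
  shows "norm_2to4 A ^ 4 = inj4 (tensA4 A)
       \<and> inj4 (tensA4 A) = inj3 (tensA3 A) ^ 2
       \<and> inj3 (tensA3 A) ^ 2 = inj4C (tensA4 A)
       \<and> inj4C (tensA4 A) = inj3C (tensA3 A) ^ 2
       \<and> inj3C (tensA3 A) ^ 2 = hR (SepR :: (real^('n\<times>'n)^('n\<times>'n)) set) (opA22 A)
       \<and> hR (SepR :: (real^('n\<times>'n)^('n\<times>'n)) set) (opA22 A)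
           = hC (SepC :: (complex^('n\<times>'n)^('n\<times>'n)) set) (cplx_mat (opA22 A))"
  using norm_2to4_pow4[of A] inj4_tensA4[of A] inj4C_tensA4[of A] inj3_tensA3[of A]
    inj3C_tensA3[of A] hR_SepR_opA22[of A] hC_SepC_opA22[of A] quartic_max_nonneg[of A]
  by simp

end
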